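(* Let $n$ be odd. Every good drawing of $K_n$ that is $(\lfloor n/2\rfloor-1)$-seq-shellable (for some face) is single-pair-seq-shellable.
   Context: A good drawing of $K_n$ is a drawing on the sphere $S^2$ in which vertices are distinct points and each edge is a simple curve joining its endpoints containing no other vertex, such that any two edges share finitely many points, no two edges meet tangentially, no three edges cross at a common point, any two edges cross at most once, and adjacent edges do not cross. $\mathcal F(D)$ is the set of faces (components of $S^2\setminus D$); $D-S$ is the subdrawing with the vertices in $S$ and incident edges deleted. For a vertex $x$ of a drawing $D'$, the superface $f(x)$ is the unique face of $D'-x$ containing all faces of $D'$ incident to $x$. Simple sequence: in a good drawing $D'$ with face $F$ and vertex $x$ incident to $F$, a sequence $(u_0,\dots,u_k)$ of distinct vertices other than $x$ is a simple sequence of $x$ (w.r.t. $F$) if $u_0$ is incident to $F$ and, for $1\le i\le k$, $u_i$ is incident to the face containing $F$ in $D'-\{u_0,\dots,u_{i-1}\}$. A good drawing $D'$ of $K_r$ is $k$-seq-shellable for a face $F$ if there are distinct vertices $a_0,\dots,a_k$ with $a_0$ incident to $F$ such that (1) for $1\le i\le k$, $a_i$ is incident to the face containing $F$ in $D'-\{a_0,\dots,a_{i-1}\}$, and (2) for $0\le i\le k$, $a_i$ has, in $D'-\{a_0,\dots,a_{i-1}\}$ and w.r.t. the face containing $F$, a simple sequence $(u_0,\dots,u_{k-i})$ with all $u_j\notin\{a_0,\dots,a_i\}$; it is seq-shellable for $F$ if it is $(\lfloor r/2\rfloor-2)$-seq-shellable for $F$. Pair-sequence of $v$ in $D$: a sequence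 $(u_0,\dots,u_{\lfloor n/2\rfloor-2})$ of distinct vertices of $V\setminus\{v\}$ such that (i) $u_0$ is incident to a face of $D$ also incident to $v$, and (ii) for every $j\in\{0,\dots,\lfloor n/2\rfloor-2\}$ with $n-j$ odd, $u_j$ is incident, in $D-\{u_0,\dots,u_{j-1}\}$, to a face also incident to $v$, and, if $j+1\le\lfloor n/2\rfloor-2$, $u_{j+1}$ is incident, in $D-\{u_0,\dots,u_j\}$, to the superface $f(u_j)$ (taken with respect to $D-\{u_0,\dots,u_{j-1}\}$). Single-pair-seq-shellable: a good drawing $D$ of $K_n$ with $n$ odd is single-pair-seq-shellable if some vertex $v$ has a pair-sequence and $D-v$ is seq-shellable for the face $f(v)$. *)

theory Defs
  imports "HOL-Analysis.Analysis"
begin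

text \<open>Drawings of the complete graph on a finite vertex set V on the sphere S2
  (unit sphere of real^3).  p gives the position of a vertex, c u v is a
  parametrisation of the edge uv (only used for u, v in V, u different from v).\<close>

definition S2 :: "(real^3) set" where
  "S2 = sphere 0 1"

type_synonym 'v drawing_pos = "'v \<Rightarrow> real^3"
type_synonym 'v drawing_edges = "'v \<Rightarrow> 'v \<Rightarrow> real \<Rightarrow> real^3"

definition edge :: "'v drawing_edges \<Rightarrow> 'v \<Rightarrow> 'v \<Rightarrow> (real^3) set" where
  "edge c u v = path_image (c u v)"

definition crosses_at :: "(real^3) set \<Rightarrow> (real^3) set \<Rightarrow> real^3 \<Rightarrow> bool" where
  "crosses_at A B x \<longleftrightarrow>
     (\<exists>U h g. openin (top_of_set S2) U \<and> x \<in> U \<and>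
        homeomorphism U (ball (0::complex) 1) h g \<and> h x = 0 \<and>
        h ` (U \<inter> A) = {z \<in> ball 0 1. Im z = 0} \<and>
        h ` (U \<inter> B) = {z \<in> ball 0 1. Re z = 0})"

definition good_drawing :: "'v set \<Rightarrow> 'v drawing_pos \<Rightarrow> 'v drawing_edges \<Rightarrow> bool" where
  "good_drawing V p c \<longleftrightarrow>
     finite V \<and> inj_on p V \<and> p ` V \<subseteq> S2 \<and>
     (\<forall>u\<in>V. \<forall>v\<in>V. u \<noteq> v \<longrightarrow>
        arc (c u v) \<and> pathstart (c u v) = p u \<and> pathfinish (c u v) = p v \<and>
        path_image (c u v) \<subseteq> S2 \<and> edge c u v = edge c v u \<and>
        (\<forall>w\<in>V. w \<noteq> u \<and> w \<noteq> v \<longrightarrow> p w \<notin> edge c u v)) \<and>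
     (\<forall>u\<in>V. \<forall>v\<in>V. \<forall>w\<in>V. \<forall>z\<in>V.
        u \<noteq> v \<and> w \<noteq> z \<and> {u, v} \<noteq> {w, z} \<longrightarrow>
          finite (edge c u v \<inter> edge c w z) \<and>
          (\<forall>x \<in> edge c u v \<inter> edge c w z - p ` V. crosses_at (edge c u v) (edge c w z) x) \<and>
          card (edge c u v \<inter> edge c w z - p ` V) \<le> 1 \<and>
          ({u, v} \<inter> {w, z} \<noteq> {} \<longrightarrow> edge c u v \<inter> edge c w z - p ` V = {})) \<and>
     (\<forall>u1\<in>V. \<forall>v1\<in>V. \<forall>u2\<in>V. \<forall>v2\<in>V. \<forall>u3\<in>V. \<forall>v3\<in>V.
        u1 \<noteq> v1 \<and> u2 \<noteq> v2 \<and> u3 \<noteq> v3 \<and> {u1, v1} \<noteq> {u2, v2} \<and>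
        {u1, v1} \<noteq> {u3, v3} \<and> {u2, v2} \<noteq> {u3, v3} \<longrightarrow>
          edge c u1 v1 \<inter> edge c u2 v2 \<inter> edge c u3 v3 \<subseteq> p ` V)"

text \<open>Point set of the subdrawing induced by the vertex set W (i.e. D - (V - W)).\<close>
definition pts :: "'v drawing_pos \<Rightarrow> 'v drawing_edges \<Rightarrow> 'v set \<Rightarrow> (real^3) set" where
  "pts p c W = p ` W \<union> \<Union>{edge c u v | u v. u \<in> W \<and> v \<in> W \<and> u \<noteq> v}"

definition faces :: "'v drawing_pos \<Rightarrow> 'v drawing_edges \<Rightarrow> 'v set \<Rightarrow> (real^3) set set" where
  "faces p c W = components (S2 - pts p c W)"

definition incident :: "'v drawing_pos \<Rightarrow> 'v \<Rightarrow> (real^3) set \<Rightarrow> bool" where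
  "incident p x F \<longleftrightarrow> p x \<in> closure F"

definition face_cont :: "'v drawing_pos \<Rightarrow> 'v drawing_edges \<Rightarrow> 'v set \<Rightarrow> (real^3) set \<Rightarrow> 'v set \<Rightarrow> (real^3) set" where
  "face_cont p c W F X = (THE G. G \<in> faces p c (W - X) \<and> F \<subseteq> G)"

definition superface :: "'v drawing_pos \<Rightarrow> 'v drawing_edges \<Rightarrow> 'v set \<Rightarrow> 'v \<Rightarrow> (real^3) set" where
  "superface p c W x = (THE G. G \<in> faces p c (W - {x}) \<and>
      (\<forall>F \<in> faces p c W. incident p x F \<longrightarrow> F \<subseteq> G))"

definition simple_seq :: "'v drawing_pos \<Rightarrow> 'v drawing_edges \<Rightarrow> 'v set \<Rightarrow> (real^3) set \<Rightarrow> 'v \<Rightarrow> 'v list \<Rightarrow> bool" where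
  "simple_seq p c W F x us \<longleftrightarrow>
     F \<in> faces p c W \<and> x \<in> W \<and> incident p x F \<and>
     distinct us \<and> set us \<subseteq> W - {x} \<and> us \<noteq> [] \<and>
     incident p (us ! 0) F \<and>
     (\<forall>i. 1 \<le> i \<and> i < length us \<longrightarrow>
        incident p (us ! i) (face_cont p c W F (set (take i us))))"

text \<open>k-seq-shellability (k an integer; for k < 0 the sequence a_0..a_k is empty).\<close>
definition k_seq_shellable :: "'v drawing_pos \<Rightarrow> 'v drawing_edges \<Rightarrow> 'v set \<Rightarrow> (real^3) set \<Rightarrow> int \<Rightarrow> bool" where
  "k_seq_shellable p c W F k \<longleftrightarrow>
     F \<in> faces p c W \<and>
     (\<exists>as. length as = nat (k + 1) \<and> distinct as \<and> set as \<subseteq> W \<and>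
        (as \<noteq> [] \<longrightarrow> incident p (as ! 0) F) \<and>
        (\<forall>i. 1 \<le> i \<and> i < length as \<longrightarrow>
           incident p (as ! i) (face_cont p c W F (set (take i as)))) \<and>
        (\<forall>i < length as. \<exists>us. length us = nat (k - int i + 1) \<and>
           simple_seq p c (W - set (take i as)) (face_cont p c W F (set (take i as))) (as ! i) us \<and>
           set us \<inter> set (take (Suc i) as) = {}))"

definition seq_shellable :: "'v drawing_pos \<Rightarrow> 'v drawing_edges \<Rightarrow> 'v set \<Rightarrow> (real^3) set \<Rightarrow> bool" where
  "seq_shellable p c W F \<longleftrightarrow> k_seq_shellable p c W F (int (card W) div 2 - 2)"

definition pair_sequence :: "'v drawing_pos \<Rightarrow> 'v drawing_edges \<Rightarrow> 'v set \<Rightarrow> 'v \<Rightarrow> 'v list \<Rightarrow> bool" where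
  "pair_sequence p c V v us \<longleftrightarrow>
     (let n = card V in
       length us = nat (int n div 2 - 1) \<and> distinct us \<and> set us \<subseteq> V - {v} \<and>
       (us \<noteq> [] \<longrightarrow> (\<exists>G \<in> faces p c V. incident p (us ! 0) G \<and> incident p v G)) \<and>
       (\<forall>j < length us. odd (n - j) \<longrightarrow>
          (\<exists>G \<in> faces p c (V - set (take j us)). incident p (us ! j) G \<and> incident p v G) \<and>
          (Suc j < length us \<longrightarrow>
             incident p (us ! Suc j) (superface p c (V - set (take j us)) (us ! j)))))"

definition single_pair_seq_shellable :: "'v drawing_pos \<Rightarrow> 'v drawing_edges \<Rightarrow> 'v set \<Rightarrow> bool" where
  "single_pair_seq_shellable p c V \<longleftrightarrow>
     (\<exists>v \<in> V. (\<exists>us. pair_sequence p c V v us) \<and> seq_shellable p c (V - {v}) (superface p c V v))"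

end

theory Submission
  imports Defs
begin

text \<open>Write \<open>n = 2m + 1\<close> and let \<open>a_0, ..., a_{m-1}\<close> witness \<open>(m - 1)\<close>-seq-shellability
  for the face \<open>F\<close>; take \<open>v = a_0\<close>. Every face of a subdrawing that contains \<open>F\<close> is
  incident to \<open>a_0\<close>. If a face containing \<open>F\<close> is incident to a vertex \<open>u\<close>, then deleting
  \<open>u\<close> merges it into the superface \<open>f(u)\<close>, which is therefore the face containing \<open>F\<close>
  after the deletion. Hence the first \<open>m - 1\<close> elements of the simple sequence
  \<open>(u_0, ..., u_{m-1})\<close> of \<open>a_0\<close> form a pair-sequence of \<open>a_0\<close>; and \<open>f(a_0)\<close> is the face of
  \<open>D - a_0\<close> containing \<open>F\<close>, so \<open>a_1, ..., a_{m-1}\<close> witness \<open>(m - 2)\<close>-seq-shellability of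
  the \<open>2m\<close>-vertex drawing \<open>D - a_0\<close> for \<open>f(a_0)\<close>, i.e. its seq-shellability.\<close>

lemma pts_mono: "W' \<subseteq> W \<Longrightarrow> pts p c W' \<subseteq> pts p c W"
  unfolding pts_def by blast

lemma faces_nonempty: "F \<in> faces p c W \<Longrightarrow> F \<noteq> {}"
  unfolding faces_def using in_components_nonempty by blast

lemma faces_eqI:
  assumes "G \<in> faces p c W" "G' \<in> faces p c W" "F \<subseteq> G" "F \<subseteq> G'" "F \<noteq> {}"
  shows "G = G'"
  using assms components_nonoverlap unfolding faces_def by blast

lemma face_subset_face_of_subdrawing:
  assumes "F \<in> faces p c W"
  obtains G where "G \<in> faces p c (W - X)" "F \<subseteq> G"
proof -
  let ?S = "S2 - pts p c (W - X)"
  obtain y where y: "y \<in> F" using faces_nonempty[OF assms] by blast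
  have FS: "F \<subseteq> ?S"
    using assms in_components_subset pts_mono[of "W - X" W p c] unfolding faces_def by blast
  have C: "connected_component_set ?S y \<in> components ?S"
    using FS y by (intro componentsI) blast
  have "F \<subseteq> connected_component_set ?S y"
    using components_maximal[OF C in_components_connected FS] assms y
      connected_component_refl[of y ?S] FS unfolding faces_def by blast
  with C show ?thesis using that unfolding faces_def by blast
qed

lemma
  assumes "F \<in> faces p c W"
  shows face_cont_in_faces: "face_cont p c W F X \<in> faces p c (W - X)"
    and face_subset_face_cont: "F \<subseteq> face_cont p c W F X"
proof -
  obtain G where G: "G \<in> faces p c (W - X)" "F \<subseteq> G"
    using face_subset_face_of_subdrawing[OF assms] .
  have "face_cont p c W F X = G"
    unfolding face_cont_def
    by (rule the_equality) (use G faces_eqI faces_nonempty[OF assms] in blast)+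
  with G show "face_cont p c W F X \<in> faces p c (W - X)" "F \<subseteq> face_cont p c W F X"
    by simp_all
qed

lemma face_cont_eqI:
  assumes "F \<in> faces p c W" "G \<in> faces p c (W - X)" "F \<subseteq> G"
  shows "face_cont p c W F X = G"
  using faces_eqI[OF face_cont_in_faces[OF assms(1)] assms(2) face_subset_face_cont[OF assms(1)]
      assms(3) faces_nonempty[OF assms(1)]] .

lemma face_cont_empty: "F \<in> faces p c W \<Longrightarrow> face_cont p c W F {} = F"
  using face_cont_eqI[of F p c W F "{}"] by simp

lemma face_cont_face_cont:
  assumes "F \<in> faces p c W"
  shows "face_cont p c (W - X) (face_cont p c W F X) Y = face_cont p c W F (X \<union> Y)"
proof -
  let ?G = "face_cont p c W F X"
  have G: "?G \<in> faces p c (W - X)" "F \<subseteq> ?G"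
    using face_cont_in_faces face_subset_face_cont assms by blast+
  have "W - (X \<union> Y) = W - X - Y" by blast
  then have "face_cont p c (W - X) ?G Y \<in> faces p c (W - (X \<union> Y))"
    using face_cont_in_faces[OF G(1)] by simp
  moreover have "F \<subseteq> face_cont p c (W - X) ?G Y"
    using G(2) face_subset_face_cont[OF G(1)] by (rule subset_trans)
  ultimately show ?thesis
    by (rule face_cont_eqI[OF assms, symmetric])
qed

lemma incident_mono: "incident p x F \<Longrightarrow> F \<subseteq> G \<Longrightarrow> incident p x G"
  unfolding incident_def using closure_mono by blast

lemma
  assumes "good_drawing V p c"
  shows good_drawing_finite: "finite V"
    and good_drawing_inj: "inj_on p V"
    and good_drawing_on_sphere: "x \<in> V \<Longrightarrow> p x \<in> S2"
    and good_drawing_arc: "u \<in> V \<Longrightarrow> v \<in> V \<Longrightarrow> u \<noteq> v \<Longrightarrow> arc (c u v)"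
    and good_drawing_vertex_notin_edge:
      "u \<in> V \<Longrightarrow> v \<in> V \<Longrightarrow> u \<noteq> v \<Longrightarrow> w \<in> V \<Longrightarrow> w \<noteq> u \<Longrightarrow> w \<noteq> v \<Longrightarrow> p w \<notin> edge c u v"
proof -
  note gd = assms[unfolded good_drawing_def]
  show "finite V" using gd by (elim conjE)
  show "inj_on p V" using gd by (elim conjE)
  show "x \<in> V \<Longrightarrow> p x \<in> S2" using gd by (elim conjE) blast
  show "u \<in> V \<Longrightarrow> v \<in> V \<Longrightarrow> u \<noteq> v \<Longrightarrow> arc (c u v)" using gd by (elim conjE) blast
  show "u \<in> V \<Longrightarrow> v \<in> V \<Longrightarrow> u \<noteq> v \<Longrightarrow> w \<in> V \<Longrightarrow> w \<noteq> u \<Longrightarrow> w \<noteq> v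
      \<Longrightarrow> p w \<notin> edge c u v"
    using gd by (elim conjE) blast
qed

lemma closed_pts:
  assumes "good_drawing V p c" "W \<subseteq> V"
  shows "closed (pts p c W)"
proof -
  have fin: "finite W"
    using good_drawing_finite[OF assms(1)] assms(2) finite_subset by blast
  have "closed (edge c u v)" if "u \<in> W" "v \<in> W" "u \<noteq> v" for u v
  proof -
    have "arc (c u v)" using good_drawing_arc[OF assms(1)] assms(2) that by blast
    then show ?thesis
      unfolding edge_def by (simp add: arc_imp_path compact_imp_closed compact_path_image)
  qed
  moreover have "finite {(u, v). u \<in> W \<and> v \<in> W \<and> u \<noteq> v}"
    by (rule finite_subset[of _ "W \<times> W"]) (auto simp: fin)
  ultimately have "closed (\<Union>((\<lambda>(u, v). edge c u v) ` {(u, v). u \<in> W \<and> v \<in> W \<and> u \<noteq> v}))"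
    by (intro closed_Union) auto
  moreover have "{edge c u v | u v. u \<in> W \<and> v \<in> W \<and> u \<noteq> v}
      = (\<lambda>(u, v). edge c u v) ` {(u, v). u \<in> W \<and> v \<in> W \<and> u \<noteq> v}"
    by auto
  ultimately show ?thesis
    unfolding pts_def using fin by (simp add: closed_Un finite_imp_closed)
qed

lemma vertex_notin_pts_delete:
  assumes "good_drawing V p c" "W \<subseteq> V" "x \<in> W"
  shows "p x \<in> S2 - pts p c (W - {x})"
proof -
  have "p x \<notin> p ` (W - {x})"
    using good_drawing_inj[OF assms(1)] assms(2,3) unfolding inj_on_def by blast
  moreover have "p x \<notin> edge c u v" if "u \<in> W - {x}" "v \<in> W - {x}" "u \<noteq> v" for u v
    using good_drawing_vertex_notin_edge[OF assms(1)] assms(2,3) that by blast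
  moreover have "p x \<in> S2"
    using good_drawing_on_sphere[OF assms(1)] assms(2,3) by blast
  ultimately show ?thesis unfolding pts_def by blast
qed

lemma openin_component_complement_pts:
  assumes "good_drawing V p c" "W \<subseteq> V" "C \<in> components (S2 - pts p c W)"
  shows "openin (top_of_set S2) C"
proof -
  have "S2 \<inter> - pts p c W = S2 - pts p c W" by blast
  then have open_S: "openin (top_of_set S2) (S2 - pts p c W)"
    using openin_open_Int[of "- pts p c W" S2] closed_pts[OF assms(1,2)] by (simp add: open_Compl)
  have "locally connected (S2 - pts p c W)"
    using locally_open_subset[OF locally_connected_sphere[of 0 1]] open_S unfolding S2_def by blast
  then show ?thesis
    using openin_trans[OF openin_components_locally_connected[OF _ assms(3)] open_S] by blast
qed

text \<open>The component of \<open>p x\<close> is open in the sphere, so it meets, and hence contains, every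
  face whose closure contains \<open>p x\<close>.\<close>

lemma incident_face_subset_component:
  assumes "good_drawing V p c" "W \<subseteq> V" "x \<in> W" "F \<in> faces p c W" "incident p x F"
  shows "F \<subseteq> connected_component_set (S2 - pts p c (W - {x})) (p x)"
proof -
  let ?S = "S2 - pts p c (W - {x})"
  let ?C = "connected_component_set ?S (p x)"
  have px: "p x \<in> ?S" using vertex_notin_pts_delete[OF assms(1-3)] .
  have C: "?C \<in> components ?S" using componentsI[OF px] .
  obtain U where U: "open U" "?C = S2 \<inter> U"
    using openin_component_complement_pts[OF assms(1) _ C] assms(2) by (auto simp: openin_open)
  have FS: "F \<subseteq> ?S"
    using assms(4) in_components_subset pts_mono[of "W - {x}" W p c] unfolding faces_def by blast
  have "p x \<in> closure F" "p x \<in> U"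
    using assms(5) connected_component_refl[OF px] U(2) unfolding incident_def by blast+
  then have "F \<inter> U \<noteq> {}" using U(1) open_Int_closure_eq_empty by blast
  then have "F \<inter> ?C \<noteq> {}" using FS U(2) by blast
  then show ?thesis
    using components_maximal[OF C _ FS] assms(4) in_components_connected unfolding faces_def by blast
qed

lemma superface_eq_face_cont:
  assumes "good_drawing V p c" "W \<subseteq> V" "x \<in> W" "F \<in> faces p c W" "incident p x F"
  shows "superface p c W x = face_cont p c W F {x}"
proof -
  let ?C = "connected_component_set (S2 - pts p c (W - {x})) (p x)"
  have C: "?C \<in> faces p c (W - {x})"
    unfolding faces_def using componentsI[OF vertex_notin_pts_delete[OF assms(1-3)]] .
  have sub: "G \<subseteq> ?C" if "G \<in> faces p c W" "incident p x G" for G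
    using incident_face_subset_component[OF assms(1-3) that] .
  have "superface p c W x = ?C"
    unfolding superface_def
  proof (rule the_equality)
    show "?C \<in> faces p c (W - {x}) \<and> (\<forall>G \<in> faces p c W. incident p x G \<longrightarrow> G \<subseteq> ?C)"
      using C sub by blast
  next
    fix G assume "G \<in> faces p c (W - {x}) \<and> (\<forall>F \<in> faces p c W. incident p x F \<longrightarrow> F \<subseteq> G)"
    then show "G = ?C"
      using faces_eqI[OF _ C _ sub[OF assms(4,5)] faces_nonempty[OF assms(4)]] assms(4,5) by blast
  qed
  also have "\<dots> = face_cont p c W F {x}"
    using face_cont_eqI[OF assms(4) C sub[OF assms(4,5)]] by simp
  finally show ?thesis .
qed

lemma simple_seq_incident:
  assumes "simple_seq p c W F x us" "j < length us"
  shows "incident p (us ! j) (face_cont p c W F (set (take j us)))"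
  using assms face_cont_empty[of F p c W] unfolding simple_seq_def by (cases j) auto

lemma superface_along_simple_seq:
  assumes "good_drawing V p c" "W \<subseteq> V" "simple_seq p c W F x us" "Suc j < length us"
  shows "superface p c (W - set (take j us)) (us ! j) = face_cont p c W F (set (take (Suc j) us))"
proof -
  have F: "F \<in> faces p c W" and dist: "distinct us" and sub: "set us \<subseteq> W"
    using assms(3) unfolding simple_seq_def by auto
  have j: "j < length us" using assms(4) by simp
  have "us ! j \<notin> set (take j us)"
    using dist j by (auto simp: in_set_conv_nth nth_eq_iff_index_eq)
  then have u: "us ! j \<in> W - set (take j us)" using sub nth_mem[OF j] by blast
  have "superface p c (W - set (take j us)) (us ! j)
      = face_cont p c (W - set (take j us)) (face_cont p c W F (set (take j us))) {us ! j}"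
    using superface_eq_face_cont[OF assms(1) _ u face_cont_in_faces[OF F]
        simple_seq_incident[OF assms(3) j]] assms(2) by blast
  also have "\<dots> = face_cont p c W F (set (take j us) \<union> {us ! j})"
    by (rule face_cont_face_cont[OF F])
  also have "set (take j us) \<union> {us ! j} = set (take (Suc j) us)"
    using j by (simp add: take_Suc_conv_app_nth)
  finally show ?thesis .
qed

lemma pair_sequence_take_simple_seq:
  assumes "good_drawing V p c" "simple_seq p c V F v us"
    and len: "nat (int (card V) div 2 - 1) \<le> length us"
  shows "pair_sequence p c V v (take (nat (int (card V) div 2 - 1)) us)"
proof -
  define L where "L = nat (int (card V) div 2 - 1)"
  define ws where "ws = take L us"
  have F: "F \<in> faces p c V" and incF: "incident p v F" "incident p (us ! 0) F"
    and dist: "distinct us" and sub: "set us \<subseteq> V - {v}"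
    using assms(2) unfolding simple_seq_def by auto
  have ws: "take j ws = take j us" "ws ! j = us ! j" "j < length us" if "j < length ws" for j
    using that unfolding ws_def by auto
  show ?thesis
    unfolding pair_sequence_def Let_def L_def[symmetric] ws_def[symmetric]
  proof (intro conjI allI impI)
    show "length ws = L" using len unfolding ws_def L_def by simp
    show "distinct ws" using dist unfolding ws_def by simp
    show "set ws \<subseteq> V - {v}" using sub set_take_subset unfolding ws_def by fast
    show "\<exists>G \<in> faces p c V. incident p (ws ! 0) G \<and> incident p v G" if "ws \<noteq> []"
      using F incF ws(2)[of 0] that by (simp, blast)
  next
    fix j assume j: "j < length ws"
    let ?G = "face_cont p c V F (set (take j us))"
    have "?G \<in> faces p c (V - set (take j ws))" "incident p (ws ! j) ?G" "incident p v ?G"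
      using face_cont_in_faces[OF F] simple_seq_incident[OF assms(2) ws(3)[OF j]]
        incident_mono[OF incF(1) face_subset_face_cont[OF F]] ws[OF j] by simp_all
    then show "\<exists>G \<in> faces p c (V - set (take j ws)). incident p (ws ! j) G \<and> incident p v G"
      by blast
    assume sj: "Suc j < length ws"
    have "superface p c (V - set (take j us)) (us ! j) = face_cont p c V F (set (take (Suc j) us))"
      using superface_along_simple_seq[OF assms(1) subset_refl assms(2) ws(3)[OF sj]] .
    then show "incident p (ws ! Suc j) (superface p c (V - set (take j ws)) (ws ! j))"
      using simple_seq_incident[OF assms(2) ws(3)[OF sj]] ws[OF j] ws[OF sj] by simp
  qed
qed

definition shelling_seq ::
    "'v drawing_pos \<Rightarrow> 'v drawing_edges \<Rightarrow> 'v set \<Rightarrow> (real^3) set \<Rightarrow> int \<Rightarrow> 'v list \<Rightarrow> bool" where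
  "shelling_seq p c W F k as \<longleftrightarrow>
     length as = nat (k + 1) \<and> distinct as \<and> set as \<subseteq> W \<and>
     (as \<noteq> [] \<longrightarrow> incident p (as ! 0) F) \<and>
     (\<forall>i. 1 \<le> i \<and> i < length as \<longrightarrow>
        incident p (as ! i) (face_cont p c W F (set (take i as)))) \<and>
     (\<forall>i < length as. \<exists>us. length us = nat (k - int i + 1) \<and>
        simple_seq p c (W - set (take i as)) (face_cont p c W F (set (take i as))) (as ! i) us \<and>
        set us \<inter> set (take (Suc i) as) = {})"

lemma k_seq_shellable_iff:
  "k_seq_shellable p c W F k \<longleftrightarrow> F \<in> faces p c W \<and> (\<exists>as. shelling_seq p c W F k as)"
  unfolding k_seq_shellable_def shelling_seq_def ..

lemma shelling_seq_head:
  assumes "F \<in> faces p c W" "shelling_seq p c W F k (a # as)"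
  shows "a \<in> W" "incident p a F" "\<exists>us. length us = nat (k + 1) \<and> simple_seq p c W F a us"
  using assms face_cont_empty[OF assms(1)] unfolding shelling_seq_def by (force+)

lemma shelling_seq_Cons:
  assumes F: "F \<in> faces p c W" and sh: "shelling_seq p c W F k (a # as)"
  shows "shelling_seq p c (W - {a}) (face_cont p c W F {a}) (k - 1) as"
proof -
  have len: "length (a # as) = nat (k + 1)" and dist: "distinct (a # as)"
    and sub: "set (a # as) \<subseteq> W"
    and inc: "\<forall>i. 1 \<le> i \<and> i < length (a # as) \<longrightarrow>
      incident p ((a # as) ! i) (face_cont p c W F (set (take i (a # as))))"
    and seqs: "\<forall>i < length (a # as). \<exists>us. length us = nat (k - int i + 1) \<and>
      simple_seq p c (W - set (take i (a # as))) (face_cont p c W F (set (take i (a # as))))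
        ((a # as) ! i) us \<and>
      set us \<inter> set (take (Suc i) (a # as)) = {}"
    using sh unfolding shelling_seq_def by blast+
  have cont: "face_cont p c (W - {a}) (face_cont p c W F {a}) (set (take i as))
      = face_cont p c W F (set (take (Suc i) (a # as)))" for i
    using face_cont_face_cont[OF F, of "{a}" "set (take i as)"] by simp
  have diff: "W - {a} - set (take i as) = W - set (take (Suc i) (a # as))" for i
    by auto
  have inc_as: "incident p (as ! i) (face_cont p c W F (set (take (Suc i) (a # as))))"
    if "i < length as" for i
    using inc[rule_format, of "Suc i"] that by simp
  show ?thesis
    unfolding shelling_seq_def cont diff
  proof (intro conjI allI impI)
    show "length as = nat (k - 1 + 1)" using len by simp
    show "distinct as" using dist by simp
    show "set as \<subseteq> W - {a}" using dist sub by auto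
    show "incident p (as ! 0) (face_cont p c W F {a})" if "as \<noteq> []"
      using inc_as[of 0] that by simp
    show "incident p (as ! i) (face_cont p c W F (set (take (Suc i) (a # as))))"
      if "1 \<le> i \<and> i < length as" for i
      using inc_as that by blast
  next
    fix i assume "i < length as"
    then obtain us where "length us = nat (k - int (Suc i) + 1)"
      "simple_seq p c (W - set (take (Suc i) (a # as)))
        (face_cont p c W F (set (take (Suc i) (a # as)))) (as ! i) us"
      "set us \<inter> set (take (Suc (Suc i)) (a # as)) = {}"
      using seqs[rule_format, of "Suc i"] by auto
    then show "\<exists>us. length us = nat (k - 1 - int i + 1) \<and>
      simple_seq p c (W - set (take (Suc i) (a # as)))
        (face_cont p c W F (set (take (Suc i) (a # as)))) (as ! i) us \<and>
      set us \<inter> set (take (Suc i) as) = {}"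
      by (intro exI[of _ us]) (auto simp: algebra_simps)
  qed
qed

lemma faces_empty: "faces p c {} = {S2}"
proof -
  have "pts p c {} = {}" unfolding pts_def by auto
  moreover have "connected S2" "S2 \<noteq> {}" unfolding S2_def by (simp_all add: connected_sphere)
  ultimately show ?thesis unfolding faces_def by (simp add: components_eq_sing_iff)
qed

lemma single_pair_seq_shellable_singleton: "single_pair_seq_shellable p c {v}"
proof -
  have "F \<subseteq> S2" if "F \<in> faces p c {v}" for F
    using that in_components_subset unfolding faces_def by blast
  then have "superface p c {v} v = S2"
    unfolding superface_def using faces_empty[of p c] by (intro the_equality) auto
  then show ?thesis
    unfolding single_pair_seq_shellable_def seq_shellable_def k_seq_shellable_def
      pair_sequence_def
    using faces_empty[of p c] by simp
qed

theorem mainTheorem8: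
  fixes V :: "'v set" and p :: "'v drawing_pos" and c :: "'v drawing_edges" and n :: nat
  assumes "good_drawing V p c"
    and "card V = n"
    and "odd n"
    and "\<exists>F \<in> faces p c V. k_seq_shellable p c V F (int n div 2 - 1)"
  shows "single_pair_seq_shellable p c V"
proof (cases "n = 1")
  case True
  then obtain v where "V = {v}" using assms(2) card_1_singletonE by blast
  then show ?thesis using single_pair_seq_shellable_singleton by simp
next
  case False
  obtain m where m: "n = 2 * m + 1" using assms(3) oddE by blast
  with False have "m \<ge> 1" by simp
  have k: "int n div 2 - 1 = int m - 1" using m by simp
  obtain F where F: "F \<in> faces p c V" and "k_seq_shellable p c V F (int m - 1)"
    using assms(4) k by auto
  then obtain as where sh: "shelling_seq p c V F (int m - 1) as"
    using k_seq_shellable_iff by blast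
  with \<open>m \<ge> 1\<close> obtain a bs where as: "as = a # bs"
    unfolding shelling_seq_def by (cases as) auto
  note head = shelling_seq_head[OF F sh[unfolded as]]
  obtain us where "length us = m" "simple_seq p c V F a us" using head(3) by auto
  then have "pair_sequence p c V a (take (nat (int (card V) div 2 - 1)) us)"
    using pair_sequence_take_simple_seq[OF assms(1)] assms(2) k by simp
  moreover have "card (V - {a}) = 2 * m"
    using good_drawing_finite[OF assms(1)] assms(2) head(1) m by simp
  then have "seq_shellable p c (V - {a}) (superface p c V a)"
    using shelling_seq_Cons[OF F sh[unfolded as]] face_cont_in_faces[OF F]
      superface_eq_face_cont[OF assms(1) subset_refl head(1) F head(2)]
    unfolding seq_shellable_def k_seq_shellable_iff by (auto simp: algebra_simps)
  ultimately show ?thesis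
    unfolding single_pair_seq_shellable_def using head(1) by blast
qed

end
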